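(* Let $F$ be a field and let $A$ and $B$ be unital locally matrix algebras over $F$. Then $A$ and $B$ are universally equivalent (as algebras in the signature of unital $F$-algebras, i.e. including the constant $1$) if and only if $\mathbf{n}(A)=\mathbf{n}(B)$.
   Context: All algebras are associative $F$-algebras with identity $1$. An algebra $A$ is a (unital) locally matrix algebra if every finite collection of elements $a_1,\ldots,a_s\in A$ lies in a subalgebra $B$ with $1_A\in B\subseteq A$ and $B\cong M_n(F)$ for some $n\ge1$. A Steinitz number is a formal product $\prod_{p\text{ prime}}p^{r_p}$ with $r_p\in\mathbb{N}\cup\{0,\infty\}$, ordered by divisibility ($v\mid u$ iff $u=vw$ for a Steinitz number $w$, where exponents add with $t+\infty=\infty$); least common multiples of arbitrary sets of positive integers exist in this lattice. For a unital locally matrix algebra $A$, $D(A)$ is the set of positive integers $n$ such that $A$ has a subalgebra $A'$ with $1_A\in A'$ and $A'\cong M_n(F)$, and $\mathbf{n}(A)$ is the least common multiple of $D(A)$. The signature of unital $F$-algebras consists of addition, multiplication, multiplication by each scalar $\alpha\in F$, and constants $0$ and $1$. The universal theory $UTh(A)$ is the set of universal closed formulas true in $A$; $A$ and $B$ are universally equivalent if $UTh(A)=UTh(B)$. *)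

theory Defs
  imports "HOL-Computational_Algebra.Primes" "HOL-Library.Extended_Nat"
          "Jordan_Normal_Form.Matrix"
begin

definition unital_algebra :: "('f::field \<Rightarrow> 'a::ring_1 \<Rightarrow> 'a) \<Rightarrow> bool" where
  "unital_algebra smul \<longleftrightarrow> Modules.module smul \<and>
     (\<forall>c x y. smul c (x * y) = smul c x * y \<and> smul c (x * y) = x * smul c y)"

definition matrix_subalg ::
  "('f::field \<Rightarrow> 'a::ring_1 \<Rightarrow> 'a) \<Rightarrow> nat \<Rightarrow> 'a set \<Rightarrow> bool" where
  "matrix_subalg smul n B \<longleftrightarrow> n \<ge> 1 \<and> 1 \<in> B \<and>
     (\<forall>x\<in>B. \<forall>y\<in>B. x + y \<in> B \<and> x * y \<in> B) \<and> (\<forall>c. \<forall>x\<in>B. smul c x \<in> B) \<and> 0 \<in> B \<and>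
     (\<exists>\<phi> :: 'f mat \<Rightarrow> 'a. bij_betw \<phi> (carrier_mat n n) B \<and>
        (\<forall>M\<in>carrier_mat n n. \<forall>N\<in>carrier_mat n n.
            \<phi> (M + N) = \<phi> M + \<phi> N \<and> \<phi> (M * N) = \<phi> M * \<phi> N) \<and>
        (\<forall>c. \<forall>M\<in>carrier_mat n n. \<phi> (c \<cdot>\<^sub>m M) = smul c (\<phi> M)) \<and>
        \<phi> (1\<^sub>m n) = 1)"

definition locally_matrix :: "('f::field \<Rightarrow> 'a::ring_1 \<Rightarrow> 'a) \<Rightarrow> bool" where
  "locally_matrix smul \<longleftrightarrow> unital_algebra smul \<and>
     (\<forall>S. finite S \<longrightarrow> (\<exists>n B. matrix_subalg smul n B \<and> S \<subseteq> B))"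

definition D_set :: "('f::field \<Rightarrow> 'a::ring_1 \<Rightarrow> 'a) \<Rightarrow> nat set" where
  "D_set smul = {n. n > 0 \<and> (\<exists>B. matrix_subalg smul n B)}"

text \<open>A Steinitz number is represented by its exponent function
p \<mapsto> r_p \<in> N \<union> {\<infinity>} on primes (set to 0 at non-primes).\<close>

definition steinitz :: "(nat \<Rightarrow> enat) set" where
  "steinitz = {r. \<forall>q. \<not> prime q \<longrightarrow> r q = 0}"

definition st_mult :: "(nat \<Rightarrow> enat) \<Rightarrow> (nat \<Rightarrow> enat) \<Rightarrow> (nat \<Rightarrow> enat)" where
  "st_mult u v = (\<lambda>p. u p + v p)"

definition st_dvd :: "(nat \<Rightarrow> enat) \<Rightarrow> (nat \<Rightarrow> enat) \<Rightarrow> bool" where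
  "st_dvd v u \<longleftrightarrow> (\<exists>w\<in>steinitz. u = st_mult v w)"

definition st_of_nat :: "nat \<Rightarrow> (nat \<Rightarrow> enat)" where
  "st_of_nat n = (\<lambda>p. if prime p then of_nat (multiplicity p n) else 0)"

definition st_lcm :: "nat set \<Rightarrow> (nat \<Rightarrow> enat)" where
  "st_lcm S = (THE u. u \<in> steinitz \<and> (\<forall>n\<in>S. st_dvd (st_of_nat n) u) \<and>
      (\<forall>v\<in>steinitz. (\<forall>n\<in>S. st_dvd (st_of_nat n) v) \<longrightarrow> st_dvd u v))"

definition steinitz_n :: "('f::field \<Rightarrow> 'a::ring_1 \<Rightarrow> 'a) \<Rightarrow> (nat \<Rightarrow> enat)" where
  "steinitz_n smul = st_lcm (D_set smul)"

datatype 'f tm = Var nat | Zero | One | Add "'f tm" "'f tm" | Mul "'f tm" "'f tm"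
  | Smul 'f "'f tm"

datatype 'f qf = Eq "'f tm" "'f tm" | FFalse | Neg "'f qf" | Conj "'f qf" "'f qf"
  | Disj "'f qf" "'f qf" | Imp "'f qf" "'f qf"

primrec tm_eval :: "('f \<Rightarrow> 'a::ring_1 \<Rightarrow> 'a) \<Rightarrow> (nat \<Rightarrow> 'a) \<Rightarrow> 'f tm \<Rightarrow> 'a" where
  "tm_eval s v (Var i) = v i"
| "tm_eval s v Zero = 0"
| "tm_eval s v One = 1"
| "tm_eval s v (Add t u) = tm_eval s v t + tm_eval s v u"
| "tm_eval s v (Mul t u) = tm_eval s v t * tm_eval s v u"
| "tm_eval s v (Smul c t) = s c (tm_eval s v t)"

primrec qf_sat :: "('f \<Rightarrow> 'a::ring_1 \<Rightarrow> 'a) \<Rightarrow> (nat \<Rightarrow> 'a) \<Rightarrow> 'f qf \<Rightarrow> bool" where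
  "qf_sat s v (Eq t u) = (tm_eval s v t = tm_eval s v u)"
| "qf_sat s v FFalse = False"
| "qf_sat s v (Neg f) = (\<not> qf_sat s v f)"
| "qf_sat s v (Conj f g) = (qf_sat s v f \<and> qf_sat s v g)"
| "qf_sat s v (Disj f g) = (qf_sat s v f \<or> qf_sat s v g)"
| "qf_sat s v (Imp f g) = (qf_sat s v f \<longrightarrow> qf_sat s v g)"

text \<open>A universal closed formula is (up to logical equivalence) the universal
closure of a quantifier-free formula; it holds in A iff the matrix holds under
every assignment.\<close>
definition UTh :: "('f \<Rightarrow> 'a::ring_1 \<Rightarrow> 'a) \<Rightarrow> 'f qf set" where
  "UTh s = {\<phi>. \<forall>v. qf_sat s v \<phi>}"

end

(*
  In a locally matrix algebra A every assignment of finitely many variables factors through a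
  matrix subalgebra M_n(F), n in D(A); hence a quantifier-free formula holds everywhere in A iff it
  holds everywhere in the algebras M_n(F), n in D(A), and UTh(A) depends only on D(A). Conversely
  n is in D(A) iff A satisfies the existential sentence "there are n x n matrix units", so D(A) is
  read off UTh(A).

  It remains that D(A) and n(A) determine each other. D(A) is closed under divisors (group matrix
  units into blocks) and under lcm: two matrix subalgebras lie in a common M_k(F), and a unital copy
  of M_m(F) inside M_k(F) forces m | k. For the latter, the diagonal units e_jj are pairwise
  conjugate orthogonal idempotents with sum 1, so the pencils 1 + (x - 1) e_jj share one determinant
  q and multiply to x 1, whence q^m = x^k. Finally, a set of positive integers closed under divisors
  and lcm consists exactly of the finite divisors of its Steinitz lcm.
*)

theory Submission
  imports Defs "Jordan_Normal_Form.Determinant"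
begin

section \<open>Determinants of idempotent pencils\<close>

interpretation const_poly: semiring_hom "\<lambda>x::'f::field. [:x:]"
  by unfold_locales (auto simp: one_pCons)

lemma const_poly_mat_hom_add:
  "A \<in> carrier_mat n n \<Longrightarrow> B \<in> carrier_mat n n \<Longrightarrow>
   const_poly.mat_hom (A + B) = const_poly.mat_hom A + const_poly.mat_hom (B :: 'f::field mat)"
  by (rule eq_matI) auto

lemma const_poly_mat_hom_zero: "const_poly.mat_hom (0\<^sub>m n n :: 'f::field mat) = 0\<^sub>m n n"
  by (rule eq_matI) auto

lemma one_plus_smult_mult_orthogonal:
  fixes X Y :: "'a::comm_ring_1 mat"
  assumes X: "X \<in> carrier_mat n n" and Y: "Y \<in> carrier_mat n n" and XY: "X * Y = 0\<^sub>m n n"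
  shows "(1\<^sub>m n + c \<cdot>\<^sub>m X) * (1\<^sub>m n + c \<cdot>\<^sub>m Y) = 1\<^sub>m n + c \<cdot>\<^sub>m (X + Y)"
proof -
  have cX: "c \<cdot>\<^sub>m X \<in> carrier_mat n n" and cY: "c \<cdot>\<^sub>m Y \<in> carrier_mat n n"
    using X Y by auto
  have S: "1\<^sub>m n + c \<cdot>\<^sub>m X \<in> carrier_mat n n" using cX by simp
  have "(1\<^sub>m n + c \<cdot>\<^sub>m X) * (1\<^sub>m n + c \<cdot>\<^sub>m Y)
      = (1\<^sub>m n + c \<cdot>\<^sub>m X) * 1\<^sub>m n + (1\<^sub>m n + c \<cdot>\<^sub>m X) * (c \<cdot>\<^sub>m Y)"
    by (rule mult_add_distrib_mat[OF S one_carrier_mat cY])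
  also have "(1\<^sub>m n + c \<cdot>\<^sub>m X) * (c \<cdot>\<^sub>m Y) = 1\<^sub>m n * (c \<cdot>\<^sub>m Y) + (c \<cdot>\<^sub>m X) * (c \<cdot>\<^sub>m Y)"
    by (rule add_mult_distrib_mat[OF one_carrier_mat cX cY])
  also have "(c \<cdot>\<^sub>m X) * (c \<cdot>\<^sub>m Y) = 0\<^sub>m n n"
    by (simp add: mult_smult_assoc_mat[OF X cY] mult_smult_distrib[OF X Y] XY)
  also have "(1\<^sub>m n + c \<cdot>\<^sub>m X) * 1\<^sub>m n = 1\<^sub>m n + c \<cdot>\<^sub>m X" by (rule right_mult_one_mat[OF S])
  also have "1\<^sub>m n * (c \<cdot>\<^sub>m Y) + 0\<^sub>m n n = c \<cdot>\<^sub>m Y"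
    by (simp only: left_mult_one_mat[OF cY] right_add_zero_mat[OF cY])
  finally show ?thesis
    by (simp only: add_smult_distrib_left_mat[OF X Y] assoc_add_mat[OF one_carrier_mat cX cY])
qed

lemma det_conjugate_involution:
  fixes A W :: "'a::comm_ring_1 mat"
  assumes A: "A \<in> carrier_mat n n" and W: "W \<in> carrier_mat n n" and WW: "W * W = 1\<^sub>m n"
  shows "det (W * A * W) = det A"
proof -
  have "det (W * A * W) = det (W * W) * det A"
    using A W by (simp add: det_mult)
  then show ?thesis by (simp add: WW)
qed

lemma dvd_if_power_eq_monom_power:
  fixes p :: "'a::idom poly"
  assumes eq: "p ^ m = [:0, 1:] ^ k" and m: "m > 0"
  shows "m dvd k"
proof -
  have "p \<noteq> 0"
    using eq m by (metis pCons_eq_0_iff power_eq_0_iff zero_neq_one)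
  then have "m * degree p = k"
    using arg_cong[OF eq, of degree] by (simp add: degree_power_eq)
  then show ?thesis by (metis dvd_triv_left)
qed

text \<open>For an idempotent \<open>X\<close> the pencil \<open>1 + (x - 1) X = (1 - X) + x X\<close> has determinant
  \<open>x ^ rank X\<close>; counting with these determinants instead of traces works in every characteristic.\<close>

definition idem_pencil :: "nat \<Rightarrow> 'f::field mat \<Rightarrow> 'f poly mat" where
  "idem_pencil n X = 1\<^sub>m n + [:-1, 1:] \<cdot>\<^sub>m const_poly.mat_hom X"

lemma idem_pencil_carrier [simp]: "X \<in> carrier_mat n n \<Longrightarrow> idem_pencil n X \<in> carrier_mat n n"
  unfolding idem_pencil_def by simp

lemma idem_pencil_zero: "idem_pencil n (0\<^sub>m n n) = 1\<^sub>m n"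
  unfolding idem_pencil_def const_poly_mat_hom_zero by simp

lemma det_idem_pencil_one: "det (idem_pencil n (1\<^sub>m n :: 'f::field mat)) = [:0, 1:] ^ n"
proof -
  have x: "1 + [:-1, 1:] = ([:0, 1:] :: 'f poly)"
    by (rule poly_eqI) (simp add: coeff_pCons split: nat.split)
  have "(1 :: 'f poly) \<cdot>\<^sub>m 1\<^sub>m n = 1\<^sub>m n" by (rule eq_matI) auto
  then have "idem_pencil n (1\<^sub>m n :: 'f mat) = [:0, 1:] \<cdot>\<^sub>m 1\<^sub>m n"
    unfolding idem_pencil_def const_poly.mat_hom_one x[symmetric]
      add_smult_distrib_right_mat[OF one_carrier_mat] by simp
  then show ?thesis by simp
qed

lemma idem_pencil_mult_orthogonal:
  assumes X: "X \<in> carrier_mat n n" and Y: "Y \<in> carrier_mat n n" and XY: "X * Y = 0\<^sub>m n n"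
  shows "idem_pencil n X * idem_pencil n Y = idem_pencil n (X + Y)"
proof -
  have LXY: "const_poly.mat_hom X * const_poly.mat_hom Y = 0\<^sub>m n n"
    using const_poly.mat_hom_mult[OF X Y] by (simp add: XY const_poly_mat_hom_zero)
  show ?thesis
    unfolding idem_pencil_def const_poly_mat_hom_add[OF X Y]
    by (rule one_plus_smult_mult_orthogonal[OF _ _ LXY]) (use X Y in simp_all)
qed

lemma det_idem_pencil_conjugate_involution:
  fixes X W :: "'f::field mat"
  assumes X: "X \<in> carrier_mat n n" and W: "W \<in> carrier_mat n n" and WW: "W * W = 1\<^sub>m n"
  shows "det (idem_pencil n (W * X * W)) = det (idem_pencil n X)"
proof -
  let ?L = "const_poly.mat_hom" and ?c = "[:-1, 1:] :: 'f poly"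
  have LX: "?L X \<in> carrier_mat n n" and LW: "?L W \<in> carrier_mat n n" using X W by auto
  have LWW: "?L W * ?L W = 1\<^sub>m n"
    using const_poly.mat_hom_mult[OF W W] by (simp add: WW const_poly.mat_hom_one)
  have LWX: "?L W * ?L X \<in> carrier_mat n n" using LW LX by simp
  have "?L W * idem_pencil n X = ?L W + ?c \<cdot>\<^sub>m (?L W * ?L X)"
    unfolding idem_pencil_def
    by (simp only: mult_add_distrib_mat[OF LW one_carrier_mat smult_carrier_mat[OF LX]]
        mult_smult_distrib[OF LW LX] right_mult_one_mat[OF LW])
  then have "?L W * idem_pencil n X * ?L W = ?L W * ?L W + (?c \<cdot>\<^sub>m (?L W * ?L X)) * ?L W"
    by (simp only: add_mult_distrib_mat[OF LW smult_carrier_mat[OF LWX] LW])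
  also have "\<dots> = 1\<^sub>m n + ?c \<cdot>\<^sub>m ?L (W * X * W)"
    by (simp only: LWW mult_smult_assoc_mat[OF LWX LW] const_poly.mat_hom_mult[OF mult_carrier_mat[OF W X] W]
        const_poly.mat_hom_mult[OF W X])
  also have "\<dots> = idem_pencil n (W * X * W)" unfolding idem_pencil_def ..
  finally have "?L W * idem_pencil n X * ?L W = idem_pencil n (W * X * W)" .
  with det_conjugate_involution[OF idem_pencil_carrier[OF X] LW LWW] show ?thesis by metis
qed

text \<open>The pencils of the \<open>m\<close> increments of the flag all have the same determinant \<open>q\<close>, and
  their product is the pencil of the identity, so \<open>q ^ m = x ^ k\<close>.\<close>

lemma dvd_dim_if_conjugate_idempotent_flag:
  fixes P W D :: "nat \<Rightarrow> 'f::field mat"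
  assumes m: "m > 0"
    and P: "\<And>j. j < m \<Longrightarrow> P j \<in> carrier_mat k k"
    and W: "\<And>j. j < m \<Longrightarrow> W j \<in> carrier_mat k k"
    and D: "\<And>j. j \<le> m \<Longrightarrow> D j \<in> carrier_mat k k"
    and D0: "D 0 = 0\<^sub>m k k" and Dm: "D m = 1\<^sub>m k"
    and DS: "\<And>j. j < m \<Longrightarrow> D (Suc j) = D j + P j"
    and DP: "\<And>j. j < m \<Longrightarrow> D j * P j = 0\<^sub>m k k"
    and WW: "\<And>j. j < m \<Longrightarrow> W j * W j = 1\<^sub>m k"
    and WPW: "\<And>j. j < m \<Longrightarrow> W j * P 0 * W j = P j"
  shows "m dvd k"
proof -
  let ?q = "det (idem_pencil k (P 0))"
  have "det (idem_pencil k (D j)) = ?q ^ j" if "j \<le> m" for j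
    using that
  proof (induction j)
    case 0
    show ?case by (simp add: D0 idem_pencil_zero)
  next
    case (Suc j)
    then have j: "j < m" by simp
    have "idem_pencil k (D (Suc j)) = idem_pencil k (D j) * idem_pencil k (P j)"
      using idem_pencil_mult_orthogonal[OF D[of j] P[OF j] DP[OF j]] j by (simp add: DS[OF j])
    then have "det (idem_pencil k (D (Suc j))) = det (idem_pencil k (D j)) * det (idem_pencil k (P j))"
      using det_mult[OF idem_pencil_carrier[OF D[of j]] idem_pencil_carrier[OF P[OF j]]] j by simp
    also have "det (idem_pencil k (P j)) = ?q"
      using det_idem_pencil_conjugate_involution[OF P W WW, of 0 j] m j by (simp add: WPW)
    finally show ?case using Suc j by simp
  qed
  from this[of m] have "?q ^ m = [:0, 1:] ^ k" by (simp add: Dm det_idem_pencil_one)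
  then show ?thesis using m by (rule dvd_if_power_eq_monom_power)
qed

section \<open>Matrix units\<close>

definition matrix_units :: "nat \<Rightarrow> (nat \<Rightarrow> nat \<Rightarrow> 'a::ring_1) \<Rightarrow> bool" where
  "matrix_units n e \<longleftrightarrow>
     (\<forall>i<n. \<forall>j<n. \<forall>k<n. \<forall>l<n. e i j * e k l = (if j = k then e i l else 0)) \<and> (\<Sum>i<n. e i i) = 1"

lemma matrix_units_mult:
  "matrix_units n e \<Longrightarrow> i < n \<Longrightarrow> j < n \<Longrightarrow> k < n \<Longrightarrow> l < n \<Longrightarrow>
   e i j * e k l = (if j = k then e i l else 0)"
  unfolding matrix_units_def by blast

lemma matrix_units_sum: "matrix_units n e \<Longrightarrow> (\<Sum>i<n. e i i) = 1"
  unfolding matrix_units_def by blast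

lemma matrix_units_pos: "matrix_units n e \<Longrightarrow> n > 0"
  unfolding matrix_units_def by (cases n) auto

lemma matrix_units_cong:
  "(\<And>i j. i < n \<Longrightarrow> j < n \<Longrightarrow> e i j = e' i j) \<Longrightarrow> matrix_units n e \<longleftrightarrow> matrix_units n e'"
proof -
  assume "\<And>i j. i < n \<Longrightarrow> j < n \<Longrightarrow> e i j = e' i j"
  moreover from this have "(\<Sum>i<n. e i i) = (\<Sum>i<n. e' i i)" by simp
  ultimately show ?thesis unfolding matrix_units_def by simp
qed

lemma matrix_units_nonzero:
  assumes e: "matrix_units n e" and a: "a < n" and b: "b < n"
  shows "e a b \<noteq> 0"
proof
  assume "e a b = 0"
  then have "e a a = 0" using matrix_units_mult[OF e a b b a] by simp
  have "e i i = 0" if i: "i < n" for i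
  proof -
    have "e i i = e i a * e a i" using matrix_units_mult[OF e i a a i] by simp
    also have "e i a = e i a * e a a" using matrix_units_mult[OF e i a a a] by simp
    finally show ?thesis using \<open>e a a = 0\<close> by simp
  qed
  then have "(\<Sum>i<n. e i i) = 0" by simp
  then show False using matrix_units_sum[OF e] by simp
qed

text \<open>The block-diagonal embedding \<open>A \<mapsto> A \<otimes> 1\<^sub>c\<close> of \<open>M\<^sub>d\<close> into \<open>M\<^sub>d\<^sub>c\<close>.\<close>

lemma matrix_units_coarsen:
  assumes e: "matrix_units (d * c) e"
  shows "matrix_units d (\<lambda>a b. \<Sum>s<c. e (a * c + s) (b * c + s))"
proof -
  define f where "f a b = (\<Sum>s<c. e (a * c + s) (b * c + s))" for a b
  have idx: "a * c + s < d * c" if "a < d" "s < c" for a s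
  proof -
    have "a * c + s < (a + 1) * c" using that by simp
    also have "\<dots> \<le> d * c" using that by (intro mult_right_mono) auto
    finally show ?thesis .
  qed
  have block_eq: "b * c + s = a * c + s' \<longleftrightarrow> b = a \<and> s = s'" if "s < c" "s' < c" for a b s s'
  proof
    assume eq: "b * c + s = a * c + s'"
    have "(b * c + s) div c = b" "(b * c + s) mod c = s" "(a * c + s') div c = a" "(a * c + s') mod c = s'"
      using that by auto
    then show "b = a \<and> s = s'" using eq by metis
  qed auto
  have prod: "f a b * f a' b' = (if b = a' then f a b' else 0)"
    if "a < d" "b < d" "a' < d" "b' < d" for a b a' b'
  proof -
    have "f a b * f a' b' = (\<Sum>s<c. \<Sum>s'<c. e (a * c + s) (b * c + s) * e (a' * c + s') (b' * c + s'))"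
      unfolding f_def by (rule sum_product)
    also have "\<dots> = (\<Sum>s<c. \<Sum>s'<c. if s' = s then (if b = a' then e (a * c + s) (b' * c + s) else 0) else 0)"
      using that by (intro sum.cong refl) (auto simp: matrix_units_mult[OF e] idx block_eq)
    also have "\<dots> = (if b = a' then f a b' else 0)" unfolding f_def by simp
    finally show ?thesis .
  qed
  have "(\<Sum>a<d. f a a) = (\<Sum>a<d. \<Sum>i = a * c..<a * c + c. e i i)"
  proof (rule sum.cong[OF refl])
    fix a
    have "(\<Sum>i = 0 + a * c..<c + a * c. e i i) = (\<Sum>s = 0..<c. e (s + a * c) (s + a * c))"
      by (rule sum.shift_bounds_nat_ivl)
    then show "f a a = (\<Sum>i = a * c..<a * c + c. e i i)"
      unfolding f_def by (simp add: atLeast0LessThan add.commute)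
  qed
  also have "\<dots> = (\<Sum>i<d * c. e i i)" by (rule sum.nat_group)
  finally have "(\<Sum>a<d. f a a) = 1" using matrix_units_sum[OF e] by simp
  then show ?thesis unfolding matrix_units_def f_def[symmetric] using prod by blast
qed

text \<open>The image of the permutation matrix of the transposition \<open>(i j)\<close>.\<close>

definition transposition_unit :: "(nat \<Rightarrow> nat \<Rightarrow> 'a::ring_1) \<Rightarrow> nat \<Rightarrow> nat \<Rightarrow> 'a" where
  "transposition_unit e i j = 1 - e i i - e j j + e i j + e j i"

lemma transposition_unit_conj:
  assumes e: "matrix_units n e" and i: "i < n" and j: "j < n"
  shows "transposition_unit e i j * transposition_unit e i j = 1"
    and "transposition_unit e i j * e i i * transposition_unit e i j = e j j"
proof -
  note E = matrix_units_mult[OF e]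
  note EE = E[OF i i i i] E[OF i i i j] E[OF i i j i] E[OF i i j j]
    E[OF i j i i] E[OF i j i j] E[OF i j j i] E[OF i j j j]
    E[OF j i i i] E[OF j i i j] E[OF j i j i] E[OF j i j j]
    E[OF j j i i] E[OF j j i j] E[OF j j j i] E[OF j j j j]
  show "transposition_unit e i j * transposition_unit e i j = 1"
    by (cases "i = j") (simp_all add: transposition_unit_def algebra_simps EE)
  show "transposition_unit e i j * e i i * transposition_unit e i j = e j j"
    by (cases "i = j") (simp_all add: transposition_unit_def algebra_simps EE)
qed

lemma unital_algebra_vector_space: "unital_algebra smul \<Longrightarrow> vector_space smul"
  unfolding unital_algebra_def vector_space_def Modules.module_def by auto

lemma unital_algebra_mult_scale_left: "unital_algebra smul \<Longrightarrow> smul c x * y = smul c (x * y)"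
  unfolding unital_algebra_def by metis

lemma unital_algebra_mult_scale_right: "unital_algebra smul \<Longrightarrow> x * smul c y = smul c (x * y)"
  unfolding unital_algebra_def by metis

lemma unital_algebra_scale_mult_scale:
  assumes "unital_algebra smul"
  shows "smul a x * smul b y = smul (a * b) (x * y)"
proof -
  interpret Modules.module smul using assms unfolding unital_algebra_def by blast
  show ?thesis using assms by (simp add: unital_algebra_mult_scale_left unital_algebra_mult_scale_right)
qed

definition mat_embedding :: "('f::field \<Rightarrow> 'a::ring_1 \<Rightarrow> 'a) \<Rightarrow> nat \<Rightarrow> ('f mat \<Rightarrow> 'a) \<Rightarrow> bool" where
  "mat_embedding smul n \<phi> \<longleftrightarrow> inj_on \<phi> (carrier_mat n n) \<and>
     (\<forall>M\<in>carrier_mat n n. \<forall>N\<in>carrier_mat n n. \<phi> (M + N) = \<phi> M + \<phi> N \<and> \<phi> (M * N) = \<phi> M * \<phi> N) \<and>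
     (\<forall>c. \<forall>M\<in>carrier_mat n n. \<phi> (c \<cdot>\<^sub>m M) = smul c (\<phi> M)) \<and> \<phi> (1\<^sub>m n) = 1"

lemma mat_embedding_add:
  "mat_embedding smul n \<phi> \<Longrightarrow> M \<in> carrier_mat n n \<Longrightarrow> N \<in> carrier_mat n n \<Longrightarrow> \<phi> (M + N) = \<phi> M + \<phi> N"
  and mat_embedding_mult:
  "mat_embedding smul n \<phi> \<Longrightarrow> M \<in> carrier_mat n n \<Longrightarrow> N \<in> carrier_mat n n \<Longrightarrow> \<phi> (M * N) = \<phi> M * \<phi> N"
  and mat_embedding_smult:
  "mat_embedding smul n \<phi> \<Longrightarrow> M \<in> carrier_mat n n \<Longrightarrow> \<phi> (c \<cdot>\<^sub>m M) = smul c (\<phi> M)"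
  and mat_embedding_one: "mat_embedding smul n \<phi> \<Longrightarrow> \<phi> (1\<^sub>m n) = 1"
  and mat_embedding_inj_on: "mat_embedding smul n \<phi> \<Longrightarrow> inj_on \<phi> (carrier_mat n n)"
  unfolding mat_embedding_def by blast+

lemma mat_embedding_zero: "mat_embedding smul n \<phi> \<Longrightarrow> \<phi> (0\<^sub>m n n) = 0"
  using mat_embedding_add[of smul n \<phi> "0\<^sub>m n n" "0\<^sub>m n n"] by simp

lemma matrix_subalg_iff_mat_embedding:
  "matrix_subalg smul n B \<longleftrightarrow> n > 0 \<and> (\<exists>\<phi>. mat_embedding smul n \<phi> \<and> B = \<phi> ` carrier_mat n n)"
  (is "?lhs \<longleftrightarrow> ?rhs")
proof
  assume ?lhs
  then show ?rhs unfolding matrix_subalg_def mat_embedding_def bij_betw_def by auto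
next
  assume ?rhs
  then obtain \<phi> where n: "n > 0" and \<phi>: "mat_embedding smul n \<phi>" and B: "B = \<phi> ` carrier_mat n n"
    by blast
  have closed: "\<phi> M + \<phi> N \<in> B" "\<phi> M * \<phi> N \<in> B" "smul c (\<phi> M) \<in> B"
    if "M \<in> carrier_mat n n" "N \<in> carrier_mat n n" for M N c
    using that mat_embedding_add[OF \<phi>, of M N, symmetric] mat_embedding_mult[OF \<phi>, of M N, symmetric]
      mat_embedding_smult[OF \<phi>, of M c, symmetric] unfolding B
    by (auto intro!: imageI)
  have "1 \<in> B" "0 \<in> B"
    unfolding B using mat_embedding_one[OF \<phi>, symmetric] mat_embedding_zero[OF \<phi>, symmetric]
    by (auto intro!: image_eqI)
  with closed n \<phi> show ?lhs
    unfolding matrix_subalg_def mat_embedding_def bij_betw_def B by auto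
qed

definition matrix_units_combination ::
  "('f::field \<Rightarrow> 'a::ring_1 \<Rightarrow> 'a) \<Rightarrow> nat \<Rightarrow> (nat \<Rightarrow> nat \<Rightarrow> 'a) \<Rightarrow> 'f mat \<Rightarrow> 'a" where
  "matrix_units_combination smul n e M = (\<Sum>i<n. \<Sum>j<n. smul (M $$ (i, j)) (e i j))"

context
  fixes smul :: "'f::field \<Rightarrow> 'a::ring_1 \<Rightarrow> 'a" and n :: nat and e :: "nat \<Rightarrow> nat \<Rightarrow> 'a"
  assumes ua: "unital_algebra smul" and e: "matrix_units n e"
begin

interpretation vector_space smul using ua by (rule unital_algebra_vector_space)

private abbreviation \<phi> where "\<phi> \<equiv> matrix_units_combination smul n e"

lemma matrix_units_combination_mult:
  assumes M: "M \<in> carrier_mat n n" and N: "N \<in> carrier_mat n n"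
  shows "\<phi> (M * N) = \<phi> M * \<phi> N"
proof -
  have "\<phi> M * \<phi> N = (\<Sum>i<n. \<Sum>j<n. \<Sum>k<n. \<Sum>l<n. smul (M $$ (i, j)) (e i j) * smul (N $$ (k, l)) (e k l))"
    unfolding matrix_units_combination_def unfolding sum_distrib_right unfolding sum_distrib_left ..
  also have "\<dots> = (\<Sum>i<n. \<Sum>j<n. \<Sum>k<n. \<Sum>l<n. if j = k then smul (M $$ (i, j) * N $$ (k, l)) (e i l) else 0)"
    by (intro sum.cong refl) (simp add: unital_algebra_scale_mult_scale[OF ua] matrix_units_mult[OF e])
  also have "\<dots> = (\<Sum>i<n. \<Sum>j<n. \<Sum>k<n. if j = k then (\<Sum>l<n. smul (M $$ (i, j) * N $$ (k, l)) (e i l)) else 0)"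
    by (intro sum.cong refl) auto
  also have "\<dots> = (\<Sum>i<n. \<Sum>j<n. \<Sum>l<n. smul (M $$ (i, j) * N $$ (j, l)) (e i l))"
    by (rule sum.cong[OF refl], rule sum.cong[OF refl]) simp
  also have "\<dots> = (\<Sum>i<n. \<Sum>l<n. \<Sum>j<n. smul (M $$ (i, j) * N $$ (j, l)) (e i l))"
    by (rule sum.cong[OF refl]) (rule sum.swap)
  also have "\<dots> = \<phi> (M * N)"
    unfolding matrix_units_combination_def using M N
    by (intro sum.cong refl) (simp add: scalar_prod_def scale_sum_left atLeast0LessThan)
  finally show ?thesis by simp
qed

lemma matrix_units_combination_sandwich:
  assumes a: "a < n" and b: "b < n"
  shows "e a a * \<phi> M * e b b = smul (M $$ (a, b)) (e a b)"
proof -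
  have "e a a * \<phi> M * e b b = (\<Sum>i<n. \<Sum>j<n. smul (M $$ (i, j)) (e a a * e i j * e b b))"
    unfolding matrix_units_combination_def sum_distrib_right sum_distrib_left
    by (simp only: unital_algebra_mult_scale_left[OF ua] unital_algebra_mult_scale_right[OF ua] mult.assoc)
  also have "\<dots> = (\<Sum>i<n. \<Sum>j<n. if i = a \<and> j = b then smul (M $$ (i, j)) (e a b) else 0)"
    by (intro sum.cong refl) (auto simp: matrix_units_mult[OF e] a b)
  also have "\<dots> = (\<Sum>i<n. if i = a then (\<Sum>j<n. if j = b then smul (M $$ (i, j)) (e a b) else 0) else 0)"
    by (intro sum.cong refl) auto
  also have "\<dots> = smul (M $$ (a, b)) (e a b)" using a b by simp
  finally show ?thesis .
qed

lemma mat_embedding_matrix_units_combination: "mat_embedding smul n \<phi>"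
  unfolding mat_embedding_def
proof (intro conjI ballI allI)
  show "inj_on \<phi> (carrier_mat n n)"
  proof (rule inj_onI)
    fix M N :: "'f mat" assume M: "M \<in> carrier_mat n n" and N: "N \<in> carrier_mat n n" and eq: "\<phi> M = \<phi> N"
    show "M = N"
    proof (rule eq_matI)
      fix a b assume "a < dim_row N" "b < dim_col N"
      then have a: "a < n" and b: "b < n" using N by auto
      have "smul (M $$ (a, b)) (e a b) = smul (N $$ (a, b)) (e a b)"
        using matrix_units_combination_sandwich[OF a b] eq by metis
      then show "M $$ (a, b) = N $$ (a, b)" using matrix_units_nonzero[OF e a b] scale_cancel_right by blast
    qed (use M N in auto)
  qed
  have "\<phi> (1\<^sub>m n) = (\<Sum>i<n. \<Sum>j<n. if i = j then e i j else 0)"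
    unfolding matrix_units_combination_def by (intro sum.cong refl) auto
  then show "\<phi> (1\<^sub>m n) = 1" using matrix_units_sum[OF e] by simp
  fix M N :: "'f mat" and c assume M: "M \<in> carrier_mat n n"
  show "\<phi> (c \<cdot>\<^sub>m M) = smul c (\<phi> M)"
    unfolding matrix_units_combination_def using M by (simp add: scale_sum_right)
  assume N: "N \<in> carrier_mat n n"
  show "\<phi> (M + N) = \<phi> M + \<phi> N"
    unfolding matrix_units_combination_def using M N by (simp add: scale_left_distrib sum.distrib)
  show "\<phi> (M * N) = \<phi> M * \<phi> N" by (rule matrix_units_combination_mult[OF M N])
qed

end

definition mat_unit :: "nat \<Rightarrow> nat \<Rightarrow> nat \<Rightarrow> 'f::field mat" where
  "mat_unit n i j = mat n n (\<lambda>(a, b). if a = i \<and> b = j then 1 else 0)"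

lemma mat_unit_carrier [simp]: "mat_unit n i j \<in> carrier_mat n n"
  unfolding mat_unit_def by simp

lemma mat_unit_mult:
  assumes "j < n" "k < n"
  shows "mat_unit n i j * mat_unit n k l = (if j = k then mat_unit n i l else (0\<^sub>m n n :: 'f::field mat))"
proof (rule eq_matI)
  fix a b assume "a < dim_row (if j = k then mat_unit n i l else (0\<^sub>m n n :: 'f mat))"
    and "b < dim_col (if j = k then mat_unit n i l else (0\<^sub>m n n :: 'f mat))"
  then have a: "a < n" and b: "b < n" by (auto simp: mat_unit_def split: if_splits)
  have "(mat_unit n i j * mat_unit n k l :: 'f mat) $$ (a, b)
      = (\<Sum>c\<in>{0..<n}. (if a = i \<and> c = j then 1 else 0) * (if c = k \<and> b = l then 1 else 0))"
    using a b by (simp add: mat_unit_def scalar_prod_def)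
  also have "\<dots> = (\<Sum>c\<in>{0..<n}. if c = j then (if a = i \<and> j = k \<and> b = l then 1 else 0) else 0)"
    by (rule sum.cong) auto
  also have "\<dots> = (if j = k then mat_unit n i l else (0\<^sub>m n n :: 'f mat)) $$ (a, b)"
    using assms a b by (simp add: mat_unit_def)
  finally show "(mat_unit n i j * mat_unit n k l :: 'f mat) $$ (a, b) =
      (if j = k then mat_unit n i l else (0\<^sub>m n n :: 'f mat)) $$ (a, b)" .
qed (auto simp: mat_unit_def)

lemma matrix_units_mat_embedding:
  assumes \<phi>: "mat_embedding smul n \<phi>"
  shows "matrix_units n (\<lambda>i j. \<phi> (mat_unit n i j))"
proof -
  have partial: "(\<Sum>i<m. \<phi> (mat_unit n i i)) = \<phi> (mat n n (\<lambda>(a, b). if a = b \<and> a < m then 1 else 0))"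
    if "m \<le> n" for m
    using that
  proof (induction m)
    case 0
    have zero: "mat n n (\<lambda>(a, b). if a = b \<and> a < 0 then 1 else 0) = 0\<^sub>m n n"
      by (rule eq_matI) auto
    show ?case unfolding zero by (simp add: mat_embedding_zero[OF \<phi>])
  next
    case (Suc m)
    have step: "mat n n (\<lambda>(a, b). if a = b \<and> a < Suc m then 1 else 0)
        = mat n n (\<lambda>(a, b). if a = b \<and> a < m then 1 else 0) + mat_unit n m m"
      unfolding mat_unit_def by (rule eq_matI) auto
    show ?case unfolding step using Suc by (simp add: mat_embedding_add[OF \<phi>])
  qed
  have full: "mat n n (\<lambda>(a, b). if a = b \<and> a < n then 1 else 0) = 1\<^sub>m n"
    by (rule eq_matI) auto
  have "(\<Sum>i<n. \<phi> (mat_unit n i i)) = 1"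
    using partial[of n] unfolding full by (simp add: mat_embedding_one[OF \<phi>])
  moreover have "\<phi> (mat_unit n i j) * \<phi> (mat_unit n k l) = (if j = k then \<phi> (mat_unit n i l) else 0)"
    if "j < n" "k < n" for i j k l
  proof -
    have "\<phi> (mat_unit n i j) * \<phi> (mat_unit n k l) = \<phi> (mat_unit n i j * mat_unit n k l)"
      by (rule mat_embedding_mult[OF \<phi> mat_unit_carrier mat_unit_carrier, symmetric])
    also have "\<dots> = \<phi> (if j = k then mat_unit n i l else 0\<^sub>m n n)" by (simp only: mat_unit_mult[OF that])
    finally show ?thesis by (simp add: mat_embedding_zero[OF \<phi>])
  qed
  ultimately show ?thesis unfolding matrix_units_def by blast
qed

lemma D_set_iff_mat_embedding: "n \<in> D_set smul \<longleftrightarrow> n > 0 \<and> (\<exists>\<phi>. mat_embedding smul n \<phi>)"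
  unfolding D_set_def matrix_subalg_iff_mat_embedding by blast

lemma D_set_iff_matrix_units:
  fixes smul :: "'f::field \<Rightarrow> 'a::ring_1 \<Rightarrow> 'a"
  assumes "unital_algebra smul"
  shows "n \<in> D_set smul \<longleftrightarrow> (\<exists>e :: nat \<Rightarrow> nat \<Rightarrow> 'a. matrix_units n e)"
proof
  assume "n \<in> D_set smul"
  then obtain \<phi> :: "'f mat \<Rightarrow> 'a" where "mat_embedding smul n \<phi>"
    unfolding D_set_iff_mat_embedding by blast
  then show "\<exists>e :: nat \<Rightarrow> nat \<Rightarrow> 'a. matrix_units n e" by (blast intro: matrix_units_mat_embedding)
next
  assume "\<exists>e :: nat \<Rightarrow> nat \<Rightarrow> 'a. matrix_units n e"
  then show "n \<in> D_set smul"
    unfolding D_set_iff_mat_embedding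
    by (blast intro: matrix_units_pos mat_embedding_matrix_units_combination[OF assms])
qed

lemma mat_embedding_inv_into:
  assumes \<phi>: "mat_embedding smul n \<phi>"
    and x: "x \<in> \<phi> ` carrier_mat n n" and y: "y \<in> \<phi> ` carrier_mat n n"
  defines "\<psi> \<equiv> inv_into (carrier_mat n n) \<phi>"
  shows "\<psi> (x + y) = \<psi> x + \<psi> y" and "\<psi> (x * y) = \<psi> x * \<psi> y"
proof -
  have inj: "inj_on \<phi> (carrier_mat n n)" by (rule mat_embedding_inj_on[OF \<phi>])
  have x': "\<psi> x \<in> carrier_mat n n" and y': "\<psi> y \<in> carrier_mat n n"
    unfolding \<psi>_def using x y by (auto intro: inv_into_into)
  have "\<phi> (\<psi> x) = x" "\<phi> (\<psi> y) = y" unfolding \<psi>_def using x y by (auto simp: f_inv_into_f)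
  then have "x + y = \<phi> (\<psi> x + \<psi> y)" and "x * y = \<phi> (\<psi> x * \<psi> y)"
    using mat_embedding_add[OF \<phi> x' y'] mat_embedding_mult[OF \<phi> x' y'] by simp_all
  then show "\<psi> (x + y) = \<psi> x + \<psi> y" and "\<psi> (x * y) = \<psi> x * \<psi> y"
    using x' y' unfolding \<psi>_def by (simp_all add: inv_into_f_f[OF inj])
qed

lemma mat_embedding_inv_into_zero_one:
  assumes \<phi>: "mat_embedding smul n \<phi>"
  shows "inv_into (carrier_mat n n) \<phi> 0 = 0\<^sub>m n n" and "inv_into (carrier_mat n n) \<phi> 1 = 1\<^sub>m n"
  using inv_into_f_f[OF mat_embedding_inj_on[OF \<phi>]]
    mat_embedding_zero[OF \<phi>] mat_embedding_one[OF \<phi>] by (metis zero_carrier_mat, metis one_carrier_mat)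

lemma matrix_subalg_closed:
  assumes ua: "unital_algebra smul" and B: "matrix_subalg smul k B"
  shows "0 \<in> B" and "1 \<in> B" and "x \<in> B \<Longrightarrow> y \<in> B \<Longrightarrow> x + y \<in> B"
    and "x \<in> B \<Longrightarrow> y \<in> B \<Longrightarrow> x - y \<in> B" and "x \<in> B \<Longrightarrow> y \<in> B \<Longrightarrow> x * y \<in> B"
proof -
  interpret Modules.module smul using ua unfolding unital_algebra_def by blast
  show "0 \<in> B" "1 \<in> B" "x \<in> B \<Longrightarrow> y \<in> B \<Longrightarrow> x + y \<in> B" "x \<in> B \<Longrightarrow> y \<in> B \<Longrightarrow> x * y \<in> B"
    using B unfolding matrix_subalg_def by blast+
  show "x - y \<in> B" if "x \<in> B" "y \<in> B"
  proof -
    have "smul (-1) y \<in> B" using B that(2) unfolding matrix_subalg_def by blast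
    then have "- y \<in> B" by simp
    with that(1) have "x + - y \<in> B" using B unfolding matrix_subalg_def by blast
    then show ?thesis by simp
  qed
qed

lemma matrix_units_in_matrix_subalg_dvd:
  fixes smul :: "'f::field \<Rightarrow> 'a::ring_1 \<Rightarrow> 'a"
  assumes ua: "unital_algebra smul" and B: "matrix_subalg smul k B"
    and e: "matrix_units m e" and eB: "\<And>i j. i < m \<Longrightarrow> j < m \<Longrightarrow> e i j \<in> B"
  shows "m dvd k"
proof -
  obtain \<phi> :: "'f mat \<Rightarrow> 'a" where \<phi>: "mat_embedding smul k \<phi>" and B_eq: "B = \<phi> ` carrier_mat k k"
    using B unfolding matrix_subalg_iff_mat_embedding by blast
  define \<psi> where "\<psi> = inv_into (carrier_mat k k) \<phi>"
  note \<psi> = inv_into_into[of _ \<phi> "carrier_mat k k", folded B_eq \<psi>_def]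
    mat_embedding_inv_into[OF \<phi>, folded B_eq \<psi>_def]
    mat_embedding_inv_into_zero_one[OF \<phi>, folded \<psi>_def]
  note B_closed = matrix_subalg_closed[OF ua B]
  have m: "m > 0" by (rule matrix_units_pos[OF e])
  define s where "s j = (\<Sum>i<j. e i i)" for j
  define w where "w j = transposition_unit e 0 j" for j
  have sB: "s j \<in> B" if "j \<le> m" for j
    using that by (induction j) (auto simp: s_def B_closed eB)
  have wB: "w j \<in> B" if "j < m" for j
    unfolding w_def transposition_unit_def using m that by (intro B_closed eB) auto
  have "s j * e j j = 0" if "j < m" for j
    unfolding s_def sum_distrib_right using that by (intro sum.neutral) (auto simp: matrix_units_mult[OF e])
  then have orth: "\<psi> (s j) * \<psi> (e j j) = 0\<^sub>m k k" if "j < m" for j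
    using \<psi>(3)[OF sB eB, of j j j, symmetric] that by (simp add: \<psi>(4))
  show ?thesis
  proof (rule dvd_dim_if_conjugate_idempotent_flag[where P = "\<lambda>j. \<psi> (e j j)" and W = "\<lambda>j. \<psi> (w j)"
        and D = "\<lambda>j. \<psi> (s j)"])
    show "\<psi> (s 0) = 0\<^sub>m k k" and "\<psi> (s m) = 1\<^sub>m k"
      using \<psi>(4,5) matrix_units_sum[OF e] by (simp_all add: s_def)
    show "\<psi> (s (Suc j)) = \<psi> (s j) + \<psi> (e j j)" if "j < m" for j
      using \<psi>(2)[OF sB eB, of j j j] that by (simp add: s_def)
    show "\<psi> (w j) * \<psi> (w j) = 1\<^sub>m k" if "j < m" for j
      using \<psi>(3)[OF wB wB, of j j, symmetric] transposition_unit_conj(1)[OF e m that] that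
      by (simp add: w_def \<psi>(5))
    show "\<psi> (w j) * \<psi> (e 0 0) * \<psi> (w j) = \<psi> (e j j)" if "j < m" for j
      using \<psi>(3)[OF wB eB, of j 0 0] \<psi>(3)[OF B_closed(5)[OF wB eB] wB, of j 0 0 j]
        transposition_unit_conj(2)[OF e m that] that m
      by (simp add: w_def)
  qed (use m orth \<psi>(1) sB eB wB in auto)
qed

lemma one_mem_D_set:
  fixes smul :: "'f::field \<Rightarrow> 'a::ring_1 \<Rightarrow> 'a"
  assumes "unital_algebra smul"
  shows "1 \<in> D_set smul"
proof -
  have "matrix_units 1 (\<lambda>i j. 1 :: 'a)" unfolding matrix_units_def by simp
  then show ?thesis using D_set_iff_matrix_units[OF assms] by blast
qed

lemma D_set_dvd_closed:
  fixes smul :: "'f::field \<Rightarrow> 'a::ring_1 \<Rightarrow> 'a"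
  assumes ua: "unital_algebra smul" and k: "k \<in> D_set smul" and "d dvd k"
  shows "d \<in> D_set smul"
proof -
  obtain e :: "nat \<Rightarrow> nat \<Rightarrow> 'a" where e: "matrix_units k e"
    using k D_set_iff_matrix_units[OF ua] by blast
  obtain c where "k = d * c" using \<open>d dvd k\<close> by blast
  with e have "matrix_units d (\<lambda>a b. \<Sum>s<c. e (a * c + s) (b * c + s))"
    by (simp add: matrix_units_coarsen)
  then show ?thesis using D_set_iff_matrix_units[OF ua] by blast
qed

lemma D_set_lcm_closed:
  fixes smul :: "'f::field \<Rightarrow> 'a::ring_1 \<Rightarrow> 'a"
  assumes lm: "locally_matrix smul" and a: "a \<in> D_set smul" and b: "b \<in> D_set smul"
  shows "lcm a b \<in> D_set smul"
proof -
  have ua: "unital_algebra smul" using lm unfolding locally_matrix_def by blast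
  obtain ea :: "nat \<Rightarrow> nat \<Rightarrow> 'a" where ea: "matrix_units a ea" using a D_set_iff_matrix_units[OF ua] by blast
  obtain eb :: "nat \<Rightarrow> nat \<Rightarrow> 'a" where eb: "matrix_units b eb" using b D_set_iff_matrix_units[OF ua] by blast
  let ?S = "case_prod ea ` ({..<a} \<times> {..<a}) \<union> case_prod eb ` ({..<b} \<times> {..<b})"
  have fin: "finite ?S" by simp
  have "\<forall>S. finite S \<longrightarrow> (\<exists>n B. matrix_subalg smul n B \<and> S \<subseteq> B)"
    using lm unfolding locally_matrix_def by blast
  from this[rule_format, OF fin] obtain k B where B: "matrix_subalg smul k B" and SB: "?S \<subseteq> B"
    by blast
  have "a dvd k" by (rule matrix_units_in_matrix_subalg_dvd[OF ua B ea]) (use SB in auto)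
  moreover have "b dvd k" by (rule matrix_units_in_matrix_subalg_dvd[OF ua B eb]) (use SB in auto)
  moreover have "k \<in> D_set smul" using B unfolding D_set_def matrix_subalg_def by auto
  ultimately show ?thesis using D_set_dvd_closed[OF ua] by (meson lcm_least)
qed

section \<open>Divisor-closed sets and Steinitz numbers\<close>

definition dvd_ideal :: "nat set \<Rightarrow> bool" where
  "dvd_ideal D \<longleftrightarrow> 1 \<in> D \<and> 0 \<notin> D \<and> (\<forall>n\<in>D. \<forall>d. d dvd n \<longrightarrow> d \<in> D) \<and> (\<forall>a\<in>D. \<forall>b\<in>D. lcm a b \<in> D)"

lemma dvd_ideal_D_set:
  assumes lm: "locally_matrix smul"
  shows "dvd_ideal (D_set smul)"
proof -
  have ua: "unital_algebra smul" using lm unfolding locally_matrix_def by blast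
  show ?thesis
    unfolding dvd_ideal_def
  proof (intro conjI ballI allI impI)
    show "1 \<in> D_set smul" by (rule one_mem_D_set[OF ua])
    show "0 \<notin> D_set smul" by (simp add: D_set_def)
    show "d \<in> D_set smul" if "n \<in> D_set smul" "d dvd n" for n d
      using D_set_dvd_closed[OF ua that] .
    show "lcm a b \<in> D_set smul" if "a \<in> D_set smul" "b \<in> D_set smul" for a b
      using D_set_lcm_closed[OF lm that] .
  qed
qed

lemma dvd_ideal_pos: "dvd_ideal D \<Longrightarrow> n \<in> D \<Longrightarrow> n > 0"
  unfolding dvd_ideal_def by (auto intro: gr0I)

lemma dvd_ideal_dvd_closed: "dvd_ideal D \<Longrightarrow> n \<in> D \<Longrightarrow> d dvd n \<Longrightarrow> d \<in> D"
  unfolding dvd_ideal_def by blast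

lemma dvd_ideal_Lcm_mem:
  assumes D: "dvd_ideal D" and "finite M" and "M \<subseteq> D"
  shows "Lcm M \<in> D"
  using \<open>finite M\<close> \<open>M \<subseteq> D\<close>
proof (induction M rule: finite_induct)
  case empty
  then show ?case using D unfolding dvd_ideal_def by simp
next
  case (insert a M)
  then show ?case using D unfolding dvd_ideal_def by simp
qed

lemma st_dvd_iff_le:
  assumes u: "u \<in> steinitz" and v: "v \<in> steinitz"
  shows "st_dvd v u \<longleftrightarrow> (\<forall>p. v p \<le> u p)"
proof
  assume "st_dvd v u"
  then obtain w where "u = st_mult v w" unfolding st_dvd_def by blast
  then show "\<forall>p. v p \<le> u p" unfolding st_mult_def by simp
next
  assume "\<forall>p. v p \<le> u p"
  then have "\<forall>p. \<exists>c. u p = v p + c" using le_iff_add by blast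
  then obtain c where c: "\<And>p. u p = v p + c p" by metis
  define w where "w p = (if prime p then c p else 0)" for p
  have "w \<in> steinitz" unfolding w_def steinitz_def by simp
  moreover have "u = st_mult v w"
  proof
    fix p
    show "u p = st_mult v w p"
      using c u v unfolding st_mult_def w_def steinitz_def by (cases "prime p") simp_all
  qed
  ultimately show "st_dvd v u" unfolding st_dvd_def by blast
qed

lemma st_lcm_eq_SUP: "st_lcm S = (\<lambda>p. if prime p then (SUP n\<in>S. enat (multiplicity p n)) else 0)"
  (is "_ = ?u")
proof -
  let ?P = "\<lambda>u. u \<in> steinitz \<and> (\<forall>n\<in>S. st_dvd (st_of_nat n) u) \<and>
      (\<forall>v\<in>steinitz. (\<forall>n\<in>S. st_dvd (st_of_nat n) v) \<longrightarrow> st_dvd u v)"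
  have st: "st_of_nat n \<in> steinitz" "?u \<in> steinitz" for n
    unfolding st_of_nat_def steinitz_def by simp_all
  have upper: "st_dvd (st_of_nat n) ?u" if "n \<in> S" for n
    unfolding st_dvd_iff_le[OF st(2) st(1)]
    using that by (auto simp: st_of_nat_def of_nat_eq_enat intro: SUP_upper)
  have least: "st_dvd ?u v" if v: "v \<in> steinitz" and h: "\<forall>n\<in>S. st_dvd (st_of_nat n) v" for v
  proof -
    have "\<forall>n\<in>S. \<forall>p. st_of_nat n p \<le> v p" using h st_dvd_iff_le[OF v st(1)] by blast
    then have "?u p \<le> v p" for p
      unfolding st_of_nat_def by (auto intro!: SUP_least split: if_splits simp: of_nat_eq_enat)
    then show ?thesis using st_dvd_iff_le[OF v st(2)] by blast
  qed
  show ?thesis unfolding st_lcm_def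
  proof (rule the_equality[where P = ?P])
    show "?P ?u" using st upper least by blast
  next
    fix u assume Pu: "?P u"
    then have "st_dvd u ?u" "st_dvd ?u u" using upper least st by blast+
    then have "\<forall>p. u p \<le> ?u p" "\<forall>p. ?u p \<le> u p"
      using st_dvd_iff_le[OF st(2)] st_dvd_iff_le[OF _ st(2)] Pu by blast+
    then show "u = ?u" using antisym by (intro ext) blast
  qed
qed

lemma st_dvd_st_lcm_iff:
  assumes n: "n > 0"
  shows "st_dvd (st_of_nat n) (st_lcm S) \<longleftrightarrow> (\<forall>p\<in>prime_factors n. \<exists>m\<in>S. multiplicity p n \<le> multiplicity p m)"
proof -
  have st: "st_of_nat n \<in> steinitz" "st_lcm S \<in> steinitz"
    unfolding st_of_nat_def steinitz_def st_lcm_eq_SUP by simp_all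
  have "st_dvd (st_of_nat n) (st_lcm S) \<longleftrightarrow> (\<forall>p. st_of_nat n p \<le> st_lcm S p)"
    by (rule st_dvd_iff_le[OF st(2,1)])
  also have "\<dots> \<longleftrightarrow> (\<forall>p. prime p \<longrightarrow> enat (multiplicity p n) \<le> (SUP m\<in>S. enat (multiplicity p m)))"
    by (simp add: st_lcm_eq_SUP st_of_nat_def of_nat_eq_enat)
  also have "\<dots> \<longleftrightarrow> (\<forall>p\<in>prime_factors n. \<exists>m\<in>S. multiplicity p n \<le> multiplicity p m)"
  proof (intro iffI allI ballI impI)
    fix p assume H: "\<forall>p. prime p \<longrightarrow> enat (multiplicity p n) \<le> (SUP m\<in>S. enat (multiplicity p m))"
      and p: "p \<in> prime_factors n"
    have pos: "multiplicity p n > 0" using p n by (simp add: prime_factors_multiplicity)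
    then have "enat (multiplicity p n - 1) < enat (multiplicity p n)" by simp
    also have "\<dots> \<le> (SUP m\<in>S. enat (multiplicity p m))" using H p by auto
    finally obtain m where "m \<in> S" "multiplicity p n - 1 < multiplicity p m"
      by (auto simp: less_SUP_iff)
    with pos show "\<exists>m\<in>S. multiplicity p n \<le> multiplicity p m" by (intro bexI[of _ m]) auto
  next
    fix p :: nat assume H: "\<forall>p\<in>prime_factors n. \<exists>m\<in>S. multiplicity p n \<le> multiplicity p m"
      and p: "prime p"
    show "enat (multiplicity p n) \<le> (SUP m\<in>S. enat (multiplicity p m))"
    proof (cases "p \<in> prime_factors n")
      case True
      then obtain m where "m \<in> S" "multiplicity p n \<le> multiplicity p m" using H by blast
      then show ?thesis by (intro SUP_upper2) simp_all
    next
      case False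
      then have "multiplicity p n = 0" using p n by (simp add: prime_factors_multiplicity)
      then show ?thesis by (simp add: zero_enat_def[symmetric])
    qed
  qed
  finally show ?thesis .
qed

lemma dvd_ideal_mem_iff:
  assumes D: "dvd_ideal D"
  shows "n \<in> D \<longleftrightarrow> n > 0 \<and> st_dvd (st_of_nat n) (st_lcm D)"
proof
  assume n: "n \<in> D"
  then have "n > 0" by (rule dvd_ideal_pos[OF D])
  with n show "n > 0 \<and> st_dvd (st_of_nat n) (st_lcm D)" by (auto simp: st_dvd_st_lcm_iff)
next
  assume "n > 0 \<and> st_dvd (st_of_nat n) (st_lcm D)"
  then have n: "n > 0" and H: "\<forall>p\<in>prime_factors n. \<exists>m\<in>D. multiplicity p n \<le> multiplicity p m"
    by (auto simp: st_dvd_st_lcm_iff)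
  then have "\<forall>p\<in>prime_factors n. \<exists>m. m \<in> D \<and> multiplicity p n \<le> multiplicity p m" by blast
  from bchoice[OF this] obtain f where f: "\<forall>p\<in>prime_factors n. f p \<in> D \<and> multiplicity p n \<le> multiplicity p (f p)"
    by blast
  define L where "L = Lcm (f ` prime_factors n)"
  have L: "L \<in> D" unfolding L_def using f by (intro dvd_ideal_Lcm_mem[OF D]) auto
  then have L0: "L \<noteq> 0" using dvd_ideal_pos[OF D] by blast
  have "n dvd L"
  proof (rule multiplicity_le_imp_dvd)
    fix p :: nat assume p: "prime p"
    show "multiplicity p n \<le> multiplicity p L"
    proof (cases "p \<in> prime_factors n")
      case True
      then have "f p dvd L" unfolding L_def by (simp add: dvd_Lcm)
      then have "multiplicity p (f p) \<le> multiplicity p L" by (rule dvd_imp_multiplicity_le[OF _ L0])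
      with f True show ?thesis by (meson order.trans)
    next
      case False
      then show ?thesis using p n by (simp add: prime_factors_multiplicity)
    qed
  qed (use n in simp)
  with L show "n \<in> D" by (rule dvd_ideal_dvd_closed[OF D])
qed

lemma dvd_ideal_eq_iff_st_lcm_eq:
  assumes "dvd_ideal D" and "dvd_ideal D'"
  shows "D = D' \<longleftrightarrow> st_lcm D = st_lcm D'"
proof
  assume "st_lcm D = st_lcm D'"
  then have "n \<in> D \<longleftrightarrow> n \<in> D'" for n by (simp only: dvd_ideal_mem_iff[OF assms(1)] dvd_ideal_mem_iff[OF assms(2)])
  then show "D = D'" by blast
qed simp

section \<open>Universal theories\<close>

fun qf_conj_list :: "'f qf list \<Rightarrow> 'f qf" where
  "qf_conj_list [] = Neg FFalse"
| "qf_conj_list (f # fs) = Conj f (qf_conj_list fs)"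

fun tm_sum_list :: "'f tm list \<Rightarrow> 'f tm" where
  "tm_sum_list [] = Zero"
| "tm_sum_list (t # ts) = Add t (tm_sum_list ts)"

lemma qf_sat_qf_conj_list: "qf_sat s v (qf_conj_list fs) \<longleftrightarrow> (\<forall>f\<in>set fs. qf_sat s v f)"
  by (induction fs) auto

lemma tm_eval_tm_sum_list: "tm_eval s v (tm_sum_list ts) = sum_list (map (tm_eval s v) ts)"
  by (induction ts) auto

text \<open>The variable \<open>Var (i * n + j)\<close> stands for the matrix unit \<open>e\<^sub>i\<^sub>j\<close>.\<close>

definition matrix_units_formula :: "nat \<Rightarrow> 'f qf" where
  "matrix_units_formula n =
     Conj (qf_conj_list [Eq (Mul (Var (i * n + j)) (Var (k * n + l))) (if j = k then Var (i * n + l) else Zero).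
                          i \<leftarrow> [0..<n], j \<leftarrow> [0..<n], k \<leftarrow> [0..<n], l \<leftarrow> [0..<n]])
          (Eq (tm_sum_list (map (\<lambda>i. Var (i * n + i)) [0..<n])) One)"

lemma qf_sat_matrix_units_formula:
  "qf_sat s v (matrix_units_formula n) \<longleftrightarrow> matrix_units n (\<lambda>i j. v (i * n + j))"
proof -
  have conj: "qf_sat s v (qf_conj_list [Eq (Mul (Var (i * n + j)) (Var (k * n + l))) (if j = k then Var (i * n + l) else Zero).
                          i \<leftarrow> [0..<n], j \<leftarrow> [0..<n], k \<leftarrow> [0..<n], l \<leftarrow> [0..<n]])
     \<longleftrightarrow> (\<forall>i<n. \<forall>j<n. \<forall>k<n. \<forall>l<n. v (i * n + j) * v (k * n + l) = (if j = k then v (i * n + l) else 0))"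
    unfolding qf_sat_qf_conj_list by (auto split: if_splits)
  have sum: "tm_eval s v (tm_sum_list (map (\<lambda>i. Var (i * n + i)) [0..<n])) = (\<Sum>i<n. v (i * n + i))"
    unfolding tm_eval_tm_sum_list by (simp add: interv_sum_list_conv_sum_set_nat atLeast0LessThan comp_def)
  show ?thesis
    unfolding matrix_units_formula_def matrix_units_def qf_sat.simps conj sum by simp
qed

lemma satisfiable_matrix_units_formula_iff:
  fixes s :: "'f \<Rightarrow> 'a::ring_1 \<Rightarrow> 'a"
  shows "(\<exists>v. qf_sat s v (matrix_units_formula n)) \<longleftrightarrow> (\<exists>e :: nat \<Rightarrow> nat \<Rightarrow> 'a. matrix_units n e)"
proof
  assume "\<exists>v. qf_sat s v (matrix_units_formula n)"
  then show "\<exists>e :: nat \<Rightarrow> nat \<Rightarrow> 'a. matrix_units n e" unfolding qf_sat_matrix_units_formula by blast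
next
  assume "\<exists>e :: nat \<Rightarrow> nat \<Rightarrow> 'a. matrix_units n e"
  then obtain e :: "nat \<Rightarrow> nat \<Rightarrow> 'a" where e: "matrix_units n e" by blast
  define v where "v x = e (x div n) (x mod n)" for x
  have "matrix_units n (\<lambda>i j. v (i * n + j))"
    using e by (subst matrix_units_cong[of n _ e]) (auto simp: v_def)
  then show "\<exists>v. qf_sat s v (matrix_units_formula n)"
    unfolding qf_sat_matrix_units_formula by blast
qed

lemma Neg_matrix_units_formula_in_UTh_iff:
  fixes smul :: "'f::field \<Rightarrow> 'a::ring_1 \<Rightarrow> 'a"
  assumes "unital_algebra smul"
  shows "Neg (matrix_units_formula n) \<in> UTh smul \<longleftrightarrow> n \<notin> D_set smul"
  unfolding D_set_iff_matrix_units[OF assms] satisfiable_matrix_units_formula_iff[of smul n, symmetric]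
    UTh_def by simp

primrec mat_tm_eval :: "nat \<Rightarrow> (nat \<Rightarrow> 'f::field mat) \<Rightarrow> 'f tm \<Rightarrow> 'f mat" where
  "mat_tm_eval n u (Var i) = u i"
| "mat_tm_eval n u Zero = 0\<^sub>m n n"
| "mat_tm_eval n u One = 1\<^sub>m n"
| "mat_tm_eval n u (Add t t') = mat_tm_eval n u t + mat_tm_eval n u t'"
| "mat_tm_eval n u (Mul t t') = mat_tm_eval n u t * mat_tm_eval n u t'"
| "mat_tm_eval n u (Smul c t) = c \<cdot>\<^sub>m mat_tm_eval n u t"

primrec mat_qf_sat :: "nat \<Rightarrow> (nat \<Rightarrow> 'f::field mat) \<Rightarrow> 'f qf \<Rightarrow> bool" where
  "mat_qf_sat n u (Eq t t') = (mat_tm_eval n u t = mat_tm_eval n u t')"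
| "mat_qf_sat n u FFalse = False"
| "mat_qf_sat n u (Neg f) = (\<not> mat_qf_sat n u f)"
| "mat_qf_sat n u (Conj f g) = (mat_qf_sat n u f \<and> mat_qf_sat n u g)"
| "mat_qf_sat n u (Disj f g) = (mat_qf_sat n u f \<or> mat_qf_sat n u g)"
| "mat_qf_sat n u (Imp f g) = (mat_qf_sat n u f \<longrightarrow> mat_qf_sat n u g)"

primrec tm_vars :: "'f tm \<Rightarrow> nat set" where
  "tm_vars (Var i) = {i}"
| "tm_vars Zero = {}"
| "tm_vars One = {}"
| "tm_vars (Add t t') = tm_vars t \<union> tm_vars t'"
| "tm_vars (Mul t t') = tm_vars t \<union> tm_vars t'"
| "tm_vars (Smul c t) = tm_vars t"

primrec qf_vars :: "'f qf \<Rightarrow> nat set" where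
  "qf_vars (Eq t t') = tm_vars t \<union> tm_vars t'"
| "qf_vars FFalse = {}"
| "qf_vars (Neg f) = qf_vars f"
| "qf_vars (Conj f g) = qf_vars f \<union> qf_vars g"
| "qf_vars (Disj f g) = qf_vars f \<union> qf_vars g"
| "qf_vars (Imp f g) = qf_vars f \<union> qf_vars g"

lemma finite_tm_vars: "finite (tm_vars t)"
  by (induction t) auto

lemma finite_qf_vars: "finite (qf_vars f)"
  by (induction f) (auto simp: finite_tm_vars)

lemma tm_eval_cong: "(\<And>i. i \<in> tm_vars t \<Longrightarrow> v i = w i) \<Longrightarrow> tm_eval s v t = tm_eval s w t"
  by (induction t) auto

lemma qf_sat_cong: "(\<And>i. i \<in> qf_vars f \<Longrightarrow> v i = w i) \<Longrightarrow> qf_sat s v f = qf_sat s w f"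
proof (induction f)
  case (Eq t t')
  then show ?case using tm_eval_cong[of t v w s] tm_eval_cong[of t' v w s] by auto
qed auto

lemma tm_eval_mat_embedding:
  assumes \<phi>: "mat_embedding smul n \<phi>" and u: "\<And>i. u i \<in> carrier_mat n n"
  shows "mat_tm_eval n u t \<in> carrier_mat n n \<and> tm_eval smul (\<lambda>i. \<phi> (u i)) t = \<phi> (mat_tm_eval n u t)"
proof (induction t)
  case (Add t t')
  then show ?case by (auto simp: mat_embedding_add[OF \<phi>])
next
  case (Mul t t')
  then show ?case by (auto simp: mat_embedding_mult[OF \<phi>])
next
  case (Smul c t)
  then show ?case by (auto simp: mat_embedding_smult[OF \<phi>])
qed (simp_all add: u mat_embedding_zero[OF \<phi>] mat_embedding_one[OF \<phi>])

lemma qf_sat_mat_embedding: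
  assumes \<phi>: "mat_embedding smul n \<phi>" and u: "\<And>i. u i \<in> carrier_mat n n"
  shows "qf_sat smul (\<lambda>i. \<phi> (u i)) f \<longleftrightarrow> mat_qf_sat n u f"
proof (induction f)
  case (Eq t t')
  show ?case
    using tm_eval_mat_embedding[OF \<phi> u, where t = t] tm_eval_mat_embedding[OF \<phi> u, where t = t']
      inj_onD[OF mat_embedding_inj_on[OF \<phi>]] by auto
qed auto

text \<open>Every assignment in a locally matrix algebra factors through one of its matrix subalgebras.\<close>

lemma UTh_iff_mat_qf_sat:
  fixes smul :: "'f::field \<Rightarrow> 'a::ring_1 \<Rightarrow> 'a"
  assumes lm: "locally_matrix smul"
  shows "f \<in> UTh smul \<longleftrightarrow> (\<forall>n\<in>D_set smul. \<forall>u. (\<forall>i. u i \<in> carrier_mat n n) \<longrightarrow> mat_qf_sat n u f)"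
proof
  assume f: "f \<in> UTh smul"
  show "\<forall>n\<in>D_set smul. \<forall>u. (\<forall>i. u i \<in> carrier_mat n n) \<longrightarrow> mat_qf_sat n u f"
  proof (intro ballI allI impI)
    fix n and u :: "nat \<Rightarrow> 'f mat" assume n: "n \<in> D_set smul" and u: "\<forall>i. u i \<in> carrier_mat n n"
    obtain \<phi> :: "'f mat \<Rightarrow> 'a" where \<phi>: "mat_embedding smul n \<phi>"
      using n D_set_iff_mat_embedding by blast
    have "qf_sat smul (\<lambda>i. \<phi> (u i)) f" using f unfolding UTh_def by blast
    then show "mat_qf_sat n u f" using qf_sat_mat_embedding[OF \<phi>] u by blast
  qed
next
  assume H: "\<forall>n\<in>D_set smul. \<forall>u. (\<forall>i. u i \<in> carrier_mat n n) \<longrightarrow> mat_qf_sat n u f"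
  show "f \<in> UTh smul" unfolding UTh_def
  proof (intro CollectI allI)
    fix v :: "nat \<Rightarrow> 'a"
    have "finite (v ` qf_vars f)" using finite_qf_vars by blast
    then obtain n B where B: "matrix_subalg smul n B" and vB: "v ` qf_vars f \<subseteq> B"
      using lm unfolding locally_matrix_def by blast
    then obtain \<phi> :: "'f mat \<Rightarrow> 'a" where n: "n > 0" and \<phi>: "mat_embedding smul n \<phi>"
      and B_eq: "B = \<phi> ` carrier_mat n n"
      unfolding matrix_subalg_iff_mat_embedding by blast
    define u where "u i = (if v i \<in> B then inv_into (carrier_mat n n) \<phi> (v i) else 0\<^sub>m n n)" for i
    have u: "u i \<in> carrier_mat n n" for i
      unfolding u_def B_eq by (auto intro: inv_into_into)
    have "n \<in> D_set smul" using n \<phi> unfolding D_set_iff_mat_embedding by blast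
    with H u have "mat_qf_sat n u f" by blast
    then have "qf_sat smul (\<lambda>i. \<phi> (u i)) f" using qf_sat_mat_embedding[OF \<phi>, where u = u, OF u] by blast
    moreover have "\<phi> (u i) = v i" if "i \<in> qf_vars f" for i
      using vB that unfolding u_def B_eq by (auto simp: f_inv_into_f)
    ultimately show "qf_sat smul v f" using qf_sat_cong[of f "\<lambda>i. \<phi> (u i)" v smul] by simp
  qed
qed

lemma UTh_eq_iff_D_set_eq:
  fixes smulA :: "'f::field \<Rightarrow> 'a::ring_1 \<Rightarrow> 'a" and smulB :: "'f \<Rightarrow> 'b::ring_1 \<Rightarrow> 'b"
  assumes A: "locally_matrix smulA" and B: "locally_matrix smulB"
  shows "UTh smulA = UTh smulB \<longleftrightarrow> D_set smulA = D_set smulB"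
proof
  assume U: "UTh smulA = UTh smulB"
  have "unital_algebra smulA" "unital_algebra smulB"
    using A B unfolding locally_matrix_def by blast+
  then have "n \<in> D_set smulA \<longleftrightarrow> n \<in> D_set smulB" for n
    using Neg_matrix_units_formula_in_UTh_iff[of smulA n] Neg_matrix_units_formula_in_UTh_iff[of smulB n] U
    by simp
  then show "D_set smulA = D_set smulB" by blast
next
  assume D: "D_set smulA = D_set smulB"
  have "f \<in> UTh smulA \<longleftrightarrow> f \<in> UTh smulB" for f
    unfolding UTh_iff_mat_qf_sat[OF A] UTh_iff_mat_qf_sat[OF B] D ..
  then show "UTh smulA = UTh smulB" by blast
qed

theorem theorem3:
  fixes smulA :: "'f::field \<Rightarrow> 'a::ring_1 \<Rightarrow> 'a"
    and smulB :: "'f \<Rightarrow> 'b::ring_1 \<Rightarrow> 'b"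
  assumes "locally_matrix smulA" and "locally_matrix smulB"
  shows "UTh smulA = UTh smulB \<longleftrightarrow> steinitz_n smulA = steinitz_n smulB"
proof -
  have "UTh smulA = UTh smulB \<longleftrightarrow> D_set smulA = D_set smulB"
    by (rule UTh_eq_iff_D_set_eq[OF assms])
  also have "\<dots> \<longleftrightarrow> steinitz_n smulA = steinitz_n smulB"
    unfolding steinitz_n_def by (rule dvd_ideal_eq_iff_st_lcm_eq[OF dvd_ideal_D_set dvd_ideal_D_set, OF assms])
  finally show ?thesis .
qed

end
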